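(* Let $\mathcal{F}\subseteq\Sigma^*$ be a finite family of strings, $k\ge0$ an integer, and $(N(F))_{F\in\mathcal{F}}$ a $k$-complete family. Then for all $F_1,F_2\in\mathcal{F}$ and all integers $0\le d\le k$, $$\mathsf{LCP}_d(F_1,F_2)=\max_{\substack{d_1+d_2=d\\ F_i'\in N_{d,d_i}(F_i)}}\mathsf{LCP}(F_1',F_2')=\max_{\substack{\lfloor d_1+d_2\rfloor\le d\\ F_i'\in N_{k,d_i}(F_i)}}\mathsf{LCP}(F_1',F_2'),$$ where in the first maximum $d_1,d_2$ range over half-integers in $[0,d]$ and in the second over half-integers in $[0,k]$.
   Context: Let $\$\notin\Sigma$ and $\Sigma_\$=\Sigma\cup\{\$\}$. $d_H$ is the Hamming distance of equal-length strings, $\mathsf{LCP}$ the longest common prefix length, $\mathsf{LCP}_d(U,V)=\max\{p\le\min(|U|,|V|): d_H(U[1..p],V[1..p])\le d\}$, and $\#_\$(W)$ the number of occurrences of $\$$ in $W$. For $U,V\in\Sigma^*$ and $d\ge0$, strings $U',V'\in\Sigma_\$^*$ form a $(U,V)_d$-pair if $|U'|=|U|$, $|V'|=|V|$, and for each position $i$: if $i>\mathsf{LCP}_d(U,V)$ or $U[i]=V[i]$ then $U'[i]=U[i]$ and $V'[i]=V[i]$; otherwise $U'[i]=V'[i]\in\{U[i],V[i],\$\}$. Sets $N(F)\subseteq\Sigma_\$^*$ ($F\in\mathcal{F}$) form a $k$-complete family if for all $U,V\in\mathcal{F}$ and $0\le d\le k$ there is a $(U,V)_d$-pair $(U',V')$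 with $U'\in N(U)$, $V'\in N(V)$. For $F\in\mathcal{F}$ and integer $d\ge 0$, $N_d(F)=\{F'\in N(F): |F'|=|F|,\ d_H(F,F')\le d\}$, and for a half-integer $0\le d'\le d$, $N_{d,d'}(F)=\{F'\in N_d(F): d_H(F,F')-\tfrac12\#_\$(F')\le d'\}$. A half-integer is an element of $\tfrac12\mathbb{Z}$. *)

theory Defs
  imports Complex_Main
begin

text \<open>Strings over \<Sigma> are lists over a type 'a; strings over \<Sigma>_$ are lists over
 'a option, where None plays the role of the fresh symbol $ and Some c the letter c.\<close>

abbreviation lift :: "'a list \<Rightarrow> 'a option list" where
  "lift U \<equiv> map Some U"

definition hamming :: "'b list \<Rightarrow> 'b list \<Rightarrow> nat" where
  "hamming xs ys = card {i. i < length xs \<and> xs ! i \<noteq> ys ! i}"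

definition LCP :: "'b list \<Rightarrow> 'b list \<Rightarrow> nat" where
  "LCP xs ys = Max {p. p \<le> min (length xs) (length ys) \<and> take p xs = take p ys}"

definition LCPd :: "nat \<Rightarrow> 'b list \<Rightarrow> 'b list \<Rightarrow> nat" where
  "LCPd d U V = Max {p. p \<le> min (length U) (length V) \<and> hamming (take p U) (take p V) \<le> d}"

definition dollar_count :: "'a option list \<Rightarrow> nat" where
  "dollar_count W = length (filter (\<lambda>c. c = None) W)"

definition half_integers :: "real set" where
  "half_integers = {x. \<exists>z::int. x = real_of_int z / 2}"

text \<open>(U,V)_d-pair; positions are 0-indexed here (position i+1 of the paper).\<close>
definition is_pair :: "nat \<Rightarrow> 'a list \<Rightarrow> 'a list \<Rightarrow> 'a option list \<Rightarrow> 'a option list \<Rightarrow> bool" where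
  "is_pair d U V U' V' \<longleftrightarrow>
     length U' = length U \<and> length V' = length V \<and>
     (\<forall>i < length U. (i \<ge> LCPd d U V \<or> U ! i = V ! i) \<longrightarrow> U' ! i = Some (U ! i)) \<and>
     (\<forall>i < length V. (i \<ge> LCPd d U V \<or> U ! i = V ! i) \<longrightarrow> V' ! i = Some (V ! i)) \<and>
     (\<forall>i < LCPd d U V. U ! i \<noteq> V ! i \<longrightarrow>
         U' ! i = V' ! i \<and> U' ! i \<in> {Some (U ! i), Some (V ! i), None})"

definition k_complete :: "nat \<Rightarrow> 'a list set \<Rightarrow> ('a list \<Rightarrow> 'a option list set) \<Rightarrow> bool" where
  "k_complete k \<F> N \<longleftrightarrow>
     (\<forall>U\<in>\<F>. \<forall>V\<in>\<F>. \<forall>d\<le>k. \<exists>U' V'. is_pair d U V U' V' \<and> U' \<in> N U \<and> V' \<in> N V)"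

definition Nd :: "('a list \<Rightarrow> 'a option list set) \<Rightarrow> nat \<Rightarrow> 'a list \<Rightarrow> 'a option list set" where
  "Nd N d F = {F' \<in> N F. length F' = length F \<and> hamming (lift F) F' \<le> d}"

definition Ndd :: "('a list \<Rightarrow> 'a option list set) \<Rightarrow> nat \<Rightarrow> real \<Rightarrow> 'a list \<Rightarrow> 'a option list set" where
  "Ndd N d d' F = {F' \<in> Nd N d F. real (hamming (lift F) F') - real (dollar_count F') / 2 \<le> d'}"

end

theory Submission
  imports Defs
begin

text \<open>Weight each position i by [F' i \<noteq> F i] - \<onehalf>[F' i = $]. These weights are nonnegative and
  sum to d_H(F, F') - \<onehalf>#$(F'). On a common prefix of F1' and F2', every position where F1 and
  F2 differ carries total weight at least 1 (either one side keeps its letter and the other does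
  not, or both are $ and pay \<onehalf> each), so LCP(F1', F2') is bounded by LCP_d(F1, F2) once the
  total weight is at most d. Conversely a (F1,F2)_d-pair attains LCP_d with total weight at most
  the number of mismatches in the LCP_d prefix, which is at most d; splitting that weight between
  the two sides yields the required half-integers d1, d2.\<close>

lemma finite_prefix_lengths: "finite {p::nat. p \<le> m \<and> P p}"
  by (rule finite_subset[of _ "{..m}"]) auto

lemma Max_prefix_lengths:
  fixes m :: nat
  assumes "P 0"
  shows "Max {p. p \<le> m \<and> P p} \<le> m" and "P (Max {p. p \<le> m \<and> P p})"
proof -
  have "Max {p. p \<le> m \<and> P p} \<in> {p. p \<le> m \<and> P p}"
    using assms finite_prefix_lengths by (intro Max_in) auto
  then show "Max {p. p \<le> m \<and> P p} \<le> m" and "P (Max {p. p \<le> m \<and> P p})" by auto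
qed

lemma le_Max_prefix_lengths: "p \<le> (m::nat) \<Longrightarrow> P p \<Longrightarrow> p \<le> Max {p. p \<le> m \<and> P p}"
  by (intro Max_ge finite_prefix_lengths) auto

lemma Max_nat_eqI:
  fixes S :: "nat set"
  assumes "\<And>y. y \<in> S \<Longrightarrow> y \<le> m" and "m \<in> S"
  shows "Max S = m"
proof -
  have "finite S" using assms(1) by (meson finite_atMost finite_subset atMost_iff subsetI)
  then show ?thesis using assms by (intro Max_eqI)
qed

lemma LCP_le_length: "LCP xs ys \<le> min (length xs) (length ys)"
  unfolding LCP_def by (rule Max_prefix_lengths) simp

lemma take_LCP: "take (LCP xs ys) xs = take (LCP xs ys) ys"
  unfolding LCP_def by (rule Max_prefix_lengths(2)) simp

lemma le_LCP: "p \<le> min (length xs) (length ys) \<Longrightarrow> take p xs = take p ys \<Longrightarrow> p \<le> LCP xs ys"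
  unfolding LCP_def by (rule le_Max_prefix_lengths)

lemma LCPd_le_length: "LCPd d U V \<le> min (length U) (length V)"
  unfolding LCPd_def by (rule Max_prefix_lengths) (simp add: hamming_def)

lemma hamming_take_LCPd: "hamming (take (LCPd d U V) U) (take (LCPd d U V) V) \<le> d"
  unfolding LCPd_def by (rule Max_prefix_lengths(2)) (simp add: hamming_def)

lemma le_LCPd:
  "p \<le> min (length U) (length V) \<Longrightarrow> hamming (take p U) (take p V) \<le> d \<Longrightarrow> p \<le> LCPd d U V"
  unfolding LCPd_def by (rule le_Max_prefix_lengths)

lemma real_card_eq_sum_indicator:
  "real (card {i. i < (n::nat) \<and> P i}) = (\<Sum>i<n. if P i then 1 else 0)"
proof -
  have "{i. i < n \<and> P i} = {..<n} \<inter> Collect P" by auto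
  then have "real (card {i. i < n \<and> P i}) = (\<Sum>i\<in>{..<n} \<inter> Collect P. 1)" by simp
  also have "\<dots> = (\<Sum>i<n. if P i then 1 else 0)" by (subst sum.inter_restrict) auto
  finally show ?thesis .
qed

lemma hamming_take:
  "p \<le> length U \<Longrightarrow> p \<le> length V \<Longrightarrow> hamming (take p U) (take p V) = card {i. i < p \<and> U ! i \<noteq> V ! i}"
  unfolding hamming_def by (auto intro!: arg_cong[where f = card])

lemma hamming_lift:
  "length F' = length F \<Longrightarrow> hamming (lift F) F' = card {i. i < length F \<and> F' ! i \<noteq> Some (F ! i)}"
  unfolding hamming_def by (auto intro!: arg_cong[where f = card])

lemma dollar_count_eq_card: "dollar_count W = card {i. i < length W \<and> W ! i = None}"
  unfolding dollar_count_def by (simp add: length_filter_conv_card)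

definition relaxed_distance :: "'a list \<Rightarrow> 'a option list \<Rightarrow> real" where
  "relaxed_distance F F' = real (hamming (lift F) F') - real (dollar_count F') / 2"

definition position_cost :: "'a list \<Rightarrow> 'a option list \<Rightarrow> nat \<Rightarrow> real" where
  "position_cost F F' i =
     (if F' ! i \<noteq> Some (F ! i) then 1 else 0) - (if F' ! i = None then 1/2 else 0)"

lemma position_cost_nonneg: "0 \<le> position_cost F F' i"
  unfolding position_cost_def by auto

lemma Ndd_iff:
  "F' \<in> Ndd N D d' F \<longleftrightarrow>
     F' \<in> N F \<and> length F' = length F \<and> hamming (lift F) F' \<le> D \<and> relaxed_distance F F' \<le> d'"
  unfolding Ndd_def Nd_def relaxed_distance_def by auto

lemma relaxed_distance_eq_sum:
  assumes "length F' = length F"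
  shows "relaxed_distance F F' = (\<Sum>i<length F. position_cost F F' i)"
proof -
  have "(\<Sum>i<length F. position_cost F F' i) =
          (\<Sum>i<length F. if F' ! i \<noteq> Some (F ! i) then 1 else 0)
        - (\<Sum>i<length F. if F' ! i = None then 1 else 0) / 2"
    unfolding position_cost_def sum_divide_distrib sum_subtractf[symmetric]
    by (intro sum.cong) auto
  then show ?thesis
    using assms by (simp add: relaxed_distance_def hamming_lift dollar_count_eq_card
        real_card_eq_sum_indicator)
qed

lemma relaxed_distance_nonneg: "length F' = length F \<Longrightarrow> 0 \<le> relaxed_distance F F'"
  by (simp add: relaxed_distance_eq_sum sum_nonneg position_cost_nonneg)

lemma of_nat_in_half_integers: "real n \<in> half_integers"
  unfolding half_integers_def by (intro CollectI exI[of _ "2 * int n"]) simp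

lemma half_integers_diff:
  assumes "a \<in> half_integers" and "b \<in> half_integers"
  shows "a - b \<in> half_integers"
proof -
  obtain x y :: int where "a = x / 2" "b = y / 2" using assms unfolding half_integers_def by auto
  then show ?thesis unfolding half_integers_def by (intro CollectI exI[of _ "x - y"]) (simp add: diff_divide_distrib)
qed

lemma relaxed_distance_in_half_integers: "relaxed_distance F F' \<in> half_integers"
  unfolding relaxed_distance_def
  by (intro half_integers_diff of_nat_in_half_integers)
     (auto simp: half_integers_def intro: exI[of _ "int (dollar_count F')"])

lemma hamming_take_LCP_le_relaxed_distance:
  assumes l1: "length F1' = length F1" and l2: "length F2' = length F2"
  shows "real (hamming (take (LCP F1' F2') F1) (take (LCP F1' F2') F2))
           \<le> relaxed_distance F1 F1' + relaxed_distance F2 F2'"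
proof -
  define p where "p = LCP F1' F2'"
  have pl: "p \<le> length F1" "p \<le> length F2" using LCP_le_length[of F1' F2'] l1 l2 by (auto simp: p_def)
  have agree: "F1' ! i = F2' ! i" if "i < p" for i
    using take_LCP[of F1' F2'] that by (metis nth_take p_def)
  have "real (hamming (take p F1) (take p F2)) = (\<Sum>i<p. if F1 ! i \<noteq> F2 ! i then 1 else 0)"
    using pl by (simp add: hamming_take real_card_eq_sum_indicator)
  also have "\<dots> \<le> (\<Sum>i<p. position_cost F1 F1' i + position_cost F2 F2' i)"
  proof (rule sum_mono)
    fix i assume "i \<in> {..<p}"
    then show "(if F1 ! i \<noteq> F2 ! i then 1 else 0) \<le> position_cost F1 F1' i + position_cost F2 F2' i"
      using agree[of i] position_cost_nonneg[of F1 F1' i] position_cost_nonneg[of F2 F2' i]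
      unfolding position_cost_def by (cases "F1' ! i") auto
  qed
  also have "\<dots> \<le> (\<Sum>i<length F1. position_cost F1 F1' i) + (\<Sum>i<length F2. position_cost F2 F2' i)"
    unfolding sum.distrib using pl by (intro add_mono sum_mono2) (auto simp: position_cost_nonneg)
  finally show ?thesis by (simp add: p_def relaxed_distance_eq_sum l1 l2)
qed

lemma LCP_le_LCPd_if_Ndd:
  assumes "F1' \<in> Ndd N D d1 F1" and "F2' \<in> Ndd N D d2 F2" and "\<lfloor>d1 + d2\<rfloor> \<le> int d"
  shows "LCP F1' F2' \<le> LCPd d F1 F2"
proof (rule le_LCPd)
  have l: "length F1' = length F1" "length F2' = length F2"
    and r: "relaxed_distance F1 F1' \<le> d1" "relaxed_distance F2 F2' \<le> d2"
    using assms(1,2) by (auto simp: Ndd_iff)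
  show "LCP F1' F2' \<le> min (length F1) (length F2)" using LCP_le_length[of F1' F2'] l by simp
  have "real (hamming (take (LCP F1' F2') F1) (take (LCP F1' F2') F2)) \<le> d1 + d2"
    using hamming_take_LCP_le_relaxed_distance[OF l] r by linarith
  then show "hamming (take (LCP F1' F2') F1) (take (LCP F1' F2') F2) \<le> d"
    using assms(3) by (metis floor_mono floor_of_nat of_nat_le_iff order.trans)
qed

context
  fixes d :: nat and U V :: "'a list" and U' V' :: "'a option list"
  assumes pair: "is_pair d U V U' V'"
begin

private lemma LCPd_le_lengths: "LCPd d U V \<le> length U" "LCPd d U V \<le> length V"
  using LCPd_le_length[of d U V] by auto

private lemma pair_lengths: "length U' = length U" "length V' = length V"
  using pair unfolding is_pair_def by auto

private lemma pair_keeps_U: "i < length U \<Longrightarrow> LCPd d U V \<le> i \<or> U ! i = V ! i \<Longrightarrow> U' ! i = Some (U ! i)"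
  using pair unfolding is_pair_def by blast

private lemma pair_keeps_V: "i < length V \<Longrightarrow> LCPd d U V \<le> i \<or> U ! i = V ! i \<Longrightarrow> V' ! i = Some (V ! i)"
  using pair unfolding is_pair_def by blast

private lemma pair_mismatch:
  "i < LCPd d U V \<Longrightarrow> U ! i \<noteq> V ! i \<Longrightarrow> U' ! i = V' ! i \<and> U' ! i \<in> {Some (U ! i), Some (V ! i), None}"
  using pair unfolding is_pair_def by blast

lemma LCPd_le_LCP_pair: "LCPd d U V \<le> LCP U' V'"
proof (rule le_LCP)
  show "LCPd d U V \<le> min (length U') (length V')" using LCPd_le_lengths pair_lengths by simp
  have "U' ! i = V' ! i" if "i < LCPd d U V" for i
    using that LCPd_le_lengths pair_keeps_U pair_keeps_V pair_mismatch by (cases "U ! i = V ! i") auto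
  then show "take (LCPd d U V) U' = take (LCPd d U V) V'"
    using LCPd_le_lengths pair_lengths by (intro nth_equalityI) auto
qed

lemma relaxed_distance_pair_le:
  "relaxed_distance U U' + relaxed_distance V V' \<le> real (hamming (take (LCPd d U V) U) (take (LCPd d U V) V))"
proof -
  have "(\<Sum>i<length U. position_cost U U' i) = (\<Sum>i<LCPd d U V. position_cost U U' i)"
    using LCPd_le_lengths pair_keeps_U by (intro sum.mono_neutral_right) (auto simp: position_cost_def)
  moreover have "(\<Sum>i<length V. position_cost V V' i) = (\<Sum>i<LCPd d U V. position_cost V V' i)"
    using LCPd_le_lengths pair_keeps_V by (intro sum.mono_neutral_right) (auto simp: position_cost_def)
  moreover have "(\<Sum>i<LCPd d U V. position_cost U U' i + position_cost V V' i)
                   \<le> (\<Sum>i<LCPd d U V. if U ! i \<noteq> V ! i then 1 else 0)"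
  proof (rule sum_mono)
    fix i assume "i \<in> {..<LCPd d U V}"
    then show "position_cost U U' i + position_cost V V' i \<le> (if U ! i \<noteq> V ! i then 1 else 0)"
      using LCPd_le_lengths pair_keeps_U pair_keeps_V pair_mismatch[of i]
      by (cases "U ! i = V ! i") (auto simp: position_cost_def)
  qed
  ultimately show ?thesis
    using LCPd_le_lengths by (simp add: relaxed_distance_eq_sum pair_lengths sum.distrib hamming_take
        real_card_eq_sum_indicator)
qed

lemma hamming_lift_pair_le:
  "hamming (lift U) U' \<le> hamming (take (LCPd d U V) U) (take (LCPd d U V) V)"
  "hamming (lift V) V' \<le> hamming (take (LCPd d U V) U) (take (LCPd d U V) V)"
  unfolding hamming_lift[OF pair_lengths(1)] hamming_lift[OF pair_lengths(2)] hamming_take[OF LCPd_le_lengths]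
  using LCPd_le_lengths pair_keeps_U pair_keeps_V by (auto intro!: card_mono, (meson not_le)+)

lemma pair_in_Ndd:
  assumes "U' \<in> N U" and "V' \<in> N V" and "d \<le> D"
  obtains d2 where "d2 \<in> half_integers" "0 \<le> d2" "d2 \<le> real d - relaxed_distance U U'"
    "U' \<in> Ndd N D (real d - d2) U" "V' \<in> Ndd N D d2 V"
proof
  have bound: "hamming (take (LCPd d U V) U) (take (LCPd d U V) V) \<le> d" by (rule hamming_take_LCPd)
  show "relaxed_distance V V' \<in> half_integers" by (rule relaxed_distance_in_half_integers)
  show "0 \<le> relaxed_distance V V'" by (rule relaxed_distance_nonneg[OF pair_lengths(2)])
  show "relaxed_distance V V' \<le> real d - relaxed_distance U U'"
    using relaxed_distance_pair_le bound by (smt (verit) of_nat_le_iff)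
  then show "U' \<in> Ndd N D (real d - relaxed_distance V V') U" "V' \<in> Ndd N D (relaxed_distance V V') V"
    using assms pair_lengths hamming_lift_pair_le bound by (auto simp: Ndd_iff)
qed

end

theorem lemma9:
  fixes \<F> :: "'a list set" and N :: "'a list \<Rightarrow> 'a option list set" and k :: nat
  assumes "finite \<F>" and "k_complete k \<F> N"
  shows "\<forall>F1\<in>\<F>. \<forall>F2\<in>\<F>. \<forall>d::nat. d \<le> k \<longrightarrow>
    LCPd d F1 F2 =
      Max {LCP F1' F2' | d1 d2 F1' F2'.
             d1 \<in> half_integers \<and> d2 \<in> half_integers \<and>
             0 \<le> d1 \<and> d1 \<le> real d \<and> 0 \<le> d2 \<and> d2 \<le> real d \<and> d1 + d2 = real d \<and>
             F1' \<in> Ndd N d d1 F1 \<and> F2' \<in> Ndd N d d2 F2}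
    \<and> LCPd d F1 F2 =
      Max {LCP F1' F2' | d1 d2 F1' F2'.
             d1 \<in> half_integers \<and> d2 \<in> half_integers \<and>
             0 \<le> d1 \<and> d1 \<le> real k \<and> 0 \<le> d2 \<and> d2 \<le> real k \<and>
             \<lfloor>d1 + d2\<rfloor> \<le> int d \<and>
             F1' \<in> Ndd N k d1 F1 \<and> F2' \<in> Ndd N k d2 F2}"
  apply (intro ballI allI impI)
  subgoal premises F for F1 F2 d
  proof -
    obtain U' V' where P: "is_pair d F1 F2 U' V'" and UN: "U' \<in> N F1" and VN: "V' \<in> N F2"
      using assms(2) F unfolding k_complete_def by blast
    have U'_nonneg: "0 \<le> relaxed_distance F1 U'"
      using P by (intro relaxed_distance_nonneg) (simp add: is_pair_def)
    obtain c where c: "c \<in> half_integers" "0 \<le> c" "c \<le> real d - relaxed_distance F1 U'"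
      "U' \<in> Ndd N d (real d - c) F1" "V' \<in> Ndd N d c F2"
      using pair_in_Ndd[OF P UN VN order.refl] by blast
    obtain c' where c': "c' \<in> half_integers" "0 \<le> c'" "c' \<le> real d - relaxed_distance F1 U'"
      "U' \<in> Ndd N k (real d - c') F1" "V' \<in> Ndd N k c' F2"
      using pair_in_Ndd[OF P UN VN F(3)] by blast
    have attained: "LCP U' V' = LCPd d F1 F2"
      using LCPd_le_LCP_pair[OF P] LCP_le_LCPd_if_Ndd[OF c(4,5), of d] by simp
    have half: "real d - x \<in> half_integers" if "x \<in> half_integers" for x
      using that by (intro half_integers_diff of_nat_in_half_integers)
    show ?thesis
      apply (intro conjI Max_nat_eqI[symmetric])
      subgoal by (auto intro: LCP_le_LCPd_if_Ndd)
      subgoal unfolding attained[symmetric] using c U'_nonneg half[OF c(1)]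
        by (intro CollectI exI[of _ "real d - c"] exI[of _ c] exI[of _ U'] exI[of _ V']) auto
      subgoal by (auto intro: LCP_le_LCPd_if_Ndd)
      subgoal unfolding attained[symmetric] using c' U'_nonneg half[OF c'(1)] F(3)
        by (intro CollectI exI[of _ "real d - c'"] exI[of _ c'] exI[of _ U'] exI[of _ V']) auto
      done
  qed
  done

end
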